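(* Let $n,k$ be positive integers with $n\geq k$ and $n\geq 3(n-k)$, and let $i\in\{0,1,\dots,n-k\}$. Then for every $C\in\mathcal{K}_k(n)$, the diagram $\alpha_{n,k,i}(C)$ lies in $\mathcal{K}_{k+1}(n+1)$.
   Context: A linear chord diagram of size $n$ is a partition of $\{1,2,\dots,2n\}$ into blocks of size two, called chords. For a chord $c=\{s_c,e_c\}$ with $s_c<e_c$, $s_c$ is its start point, $e_c$ its end point, and its length is $e_c-s_c$. $\mathcal{K}_k(n)$ is the set of all linear chord diagrams of size $n$ in which every chord has length at least $k$. Let $M_{n,k}=\{k+1,\dots,2n-k\}$, and for a diagram $C$ of size $n$ let $S_C$ be the set of chords of $C$ with neither endpoint in $M_{n,k}$. The map $\alpha_{n,k,i}$ is defined on $C\in\mathcal{K}_k(n)$ as follows. Insert a new chord $c$ whose start point is placed immediately before $M_{n,k}$ (between positions $k$ and $k+1$) and whose end point is placed immediately after $M_{n,k}$ (between positions $2n-k$ and $2n-k+1$), keeping the relative order of all original points, and relabel the points $1,\dots,2n+2$; so $c=\{k+1,2n-k+2\}$. Then repeatedly swap the start point of $c$ with the nearest start point to its left belonging to a chord of $S_C$ (i.e., the two chords exchange these start positions), stopping when exactly $i$ start points of chords of $S_C$ lie to the left of the start point of $c$. The resulting diagram of size $n+1$ is $\alpha_{n,k,i}(C)$. (Under the hypotheses, $|S_C|\ge n-k$, so this is well defined.) *)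

theory Defs
  imports Main
begin

definition is_diagram :: "nat \<Rightarrow> (nat \<times> nat) set \<Rightarrow> bool" where
  "is_diagram n C \<longleftrightarrow>
     (\<forall>c\<in>C. fst c < snd c \<and> fst c \<in> {1..2*n} \<and> snd c \<in> {1..2*n}) \<and>
     (\<forall>p\<in>{1..2*n}. \<exists>!c\<in>C. p = fst c \<or> p = snd c)"

definition K :: "nat \<Rightarrow> nat \<Rightarrow> (nat \<times> nat) set set" where
  "K k n = {C. is_diagram n C \<and> (\<forall>c\<in>C. snd c - fst c \<ge> k)}"

definition Mset :: "nat \<Rightarrow> nat \<Rightarrow> nat set" where
  "Mset n k = {k+1..2*n-k}"

definition Sch :: "nat \<Rightarrow> nat \<Rightarrow> (nat \<times> nat) set \<Rightarrow> (nat \<times> nat) set" where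
  "Sch n k C = {c\<in>C. fst c \<notin> Mset n k \<and> snd c \<notin> Mset n k}"

text \<open>Relabelling of old points after inserting a point before and after M_{n,k}.\<close>
definition shift :: "nat \<Rightarrow> nat \<Rightarrow> nat \<Rightarrow> nat" where
  "shift n k p = (if p \<le> k then p else if p \<le> 2*n-k then p+1 else p+2)"

definition insert_chord :: "nat \<Rightarrow> nat \<Rightarrow> (nat \<times> nat) set \<Rightarrow> (nat \<times> nat) set" where
  "insert_chord n k C =
     (\<lambda>(s,e). (shift n k s, shift n k e)) ` C \<union> {(k+1, 2*n-k+2)}"

text \<open>One swap: the new chord c has end point e0; chords of S_C are recognised
  by their end points (the set E, which never changes during swapping).\<close>
definition swap_step :: "nat set \<Rightarrow> nat \<Rightarrow> (nat \<times> nat) set \<Rightarrow> (nat \<times> nat) set" where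
  "swap_step E e0 D =
     (let x = (THE s. (s,e0) \<in> D);
          p = Max {s. \<exists>e\<in>E. (s,e) \<in> D \<and> s < x};
          ep = (THE e. (p,e) \<in> D)
      in (D - {(x,e0),(p,ep)}) \<union> {(p,e0),(x,ep)})"

text \<open>alpha_{n,k,i}: insert c, then swap until exactly i start points of S_C-chords
  lie left of the start of c. Each swap decreases this count by exactly one, so
  this is (initial count - i) swaps.\<close>
definition alpha :: "nat \<Rightarrow> nat \<Rightarrow> nat \<Rightarrow> (nat \<times> nat) set \<Rightarrow> (nat \<times> nat) set" where
  "alpha n k i C =
     (let D0 = insert_chord n k C;
          E = shift n k ` (snd ` Sch n k C);
          m = card {d \<in> D0. snd d \<in> E \<and> fst d < k+1}
      in (swap_step E (2*n-k+2) ^^ (m - i)) D0)"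

end

(*
  Insertion lengthens every chord with an endpoint outside M_{n,k} by at least one, and chords of
  S_C by two. Since 3(n-k) <= n, no chord of length at least k fits inside M_{n,k}, so every old
  chord gains. A swap moves the start of an S_C-chord to the previous start x of the new chord:
  either x is the next point (the chord keeps a gain of one), or x-1 starts a chord ending in M,
  which forces x <= 2(n-k)+1, far enough left. Finally the new chord ends at 2n-k+2 and its start
  is preceded only by the i remaining S_C-starts and by starts of chords ending in M; counting
  endpoints in [1,k], M and [2n-k+1,2n] shows there are at most n-k of the latter, so the new chord
  has length at least k+1.
*)
theory Submission
  imports Defs
begin

lemma is_diagram_chordD:
  assumes "is_diagram N D" "(a,b) \<in> D"
  shows "a < b" "1 \<le> a" "b \<le> 2*N"
proof -
  have "fst (a,b) < snd (a,b) \<and> fst (a,b) \<in> {1..2*N} \<and> snd (a,b) \<in> {1..2*N}"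
    using assms unfolding is_diagram_def by blast
  then show "a < b" "1 \<le> a" "b \<le> 2*N" by auto
qed

lemma is_diagram_chord_unique:
  assumes D: "is_diagram N D" and ab: "(a,b) \<in> D" and "(a',b') \<in> D"
    and "q = a \<or> q = b" and "q = a' \<or> q = b'"
  shows "a = a' \<and> b = b'"
proof -
  have "q \<in> {1..2*N}" using is_diagram_chordD[OF D ab] assms(4) by auto
  then have "\<exists>!c\<in>D. q = fst c \<or> q = snd c" using D unfolding is_diagram_def by blast
  then have "(a,b) = (a',b')" using assms(2-5) by (metis fst_conv snd_conv)
  then show ?thesis by simp
qed

lemma is_diagram_coverE:
  assumes "is_diagram N D" and "1 \<le> q" and "q \<le> 2*N"
  obtains a b where "(a,b) \<in> D" and "q = a \<or> q = b"
proof -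
  have "q \<in> {1..2*N}" using assms(2,3) by simp
  then have "\<exists>c\<in>D. q = fst c \<or> q = snd c" using assms(1) unfolding is_diagram_def by blast
  then show ?thesis using that by (metis prod.collapse)
qed

lemma is_diagram_swap:
  assumes D: "is_diagram N D" and ab: "(a,b) \<in> D" and ce: "(c,e) \<in> D"
    and ne: "(a,b) \<noteq> (c,e)" and "c < b" and "a < e"
  shows "is_diagram N (D - {(a,b),(c,e)} \<union> {(c,b),(a,e)})"
proof -
  have disj: "a \<noteq> c" "a \<noteq> e" "b \<noteq> c" "b \<noteq> e"
    using is_diagram_chord_unique[OF D ab ce] ne by blast+
  have bnd: "a < b" "c < e" "1 \<le> a" "1 \<le> c" "b \<le> 2*N" "e \<le> 2*N"
    using is_diagram_chordD[OF D ab] is_diagram_chordD[OF D ce] by auto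
  let ?D = "D - {(a,b),(c,e)} \<union> {(c,b),(a,e)}"
  have "\<forall>q\<in>{1..2*N}. \<exists>!x\<in>?D. q = fst x \<or> q = snd x"
  proof
    fix q assume q: "q \<in> {1..2*N}"
    obtain a' b' where y: "(a',b') \<in> D" "q = a' \<or> q = b'"
      using is_diagram_coverE[OF D, of q] q by auto
    have old: "x = (a',b')" if "x \<in> D" "q = fst x \<or> q = snd x" for x
      using is_diagram_chord_unique[OF D _ y(1), of "fst x" "snd x" q] that y(2) by (simp add: prod_eq_iff)
    show "\<exists>!x\<in>?D. q = fst x \<or> q = snd x"
    proof (cases "(a',b') \<in> {(a,b),(c,e)}")
      case True
      have new: "x \<in> {(c,b),(a,e)}" if "x \<in> ?D" "q = fst x \<or> q = snd x" for x
        using that old True by blast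
      have "q \<in> {a,b,c,e}" using True y by auto
      then show "\<exists>!x\<in>?D. q = fst x \<or> q = snd x"
      proof (intro ex_ex1I)
        fix x1 x2 assume x1: "x1 \<in> ?D \<and> (q = fst x1 \<or> q = snd x1)"
          and x2: "x2 \<in> ?D \<and> (q = fst x2 \<or> q = snd x2)"
        have "x1 \<in> {(c,b),(a,e)}" "x2 \<in> {(c,b),(a,e)}" using new x1 x2 by blast+
        then show "x1 = x2" using x1 x2 disj bnd(1,2) by auto
      qed auto
    next
      case False
      have "x = (a',b')" if "x \<in> ?D" "q = fst x \<or> q = snd x" for x
      proof -
        have "x \<in> D" using that(1,2) old[OF ab] old[OF ce] False by auto
        then show ?thesis using old that(2) by blast
      qed
      then show "\<exists>!x\<in>?D. q = fst x \<or> q = snd x" using y False by (intro ex1I[of _ "(a',b')"]) auto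
    qed
  qed
  moreover have "\<forall>x\<in>?D. fst x < snd x \<and> fst x \<in> {1..2*N} \<and> snd x \<in> {1..2*N}"
  proof
    fix x assume "x \<in> ?D"
    then consider "x \<in> D" | "x = (c,b)" | "x = (a,e)" by blast
    then show "fst x < snd x \<and> fst x \<in> {1..2*N} \<and> snd x \<in> {1..2*N}"
    proof cases
      case 1
      then show ?thesis using is_diagram_chordD[OF D, of "fst x" "snd x"] by simp
    qed (use bnd assms(5,6) in auto)
  qed
  ultimately show ?thesis unfolding is_diagram_def by (intro conjI)
qed

lemma is_diagram_finite:
  assumes "is_diagram N D"
  shows "finite D"
proof (rule finite_subset)
  show "D \<subseteq> {1..2*N} \<times> {1..2*N}"
    using is_diagram_chordD[OF assms] by fastforce
qed simp

lemma strict_mono_shift: "strict_mono (shift n k)"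
  by (rule strict_monoI) (auto simp: shift_def)

lemma shift_eq_iff [simp]: "shift n k a = shift n k b \<longleftrightarrow> a = b"
  using strict_mono_eq[OF strict_mono_shift] .

lemma shift_left: "p \<le> k \<Longrightarrow> shift n k p = p"
  and shift_middle: "k < p \<Longrightarrow> p \<le> 2*n-k \<Longrightarrow> shift n k p = p+1"
  and shift_right: "k \<le> n \<Longrightarrow> 2*n-k < p \<Longrightarrow> shift n k p = p+2"
  by (auto simp: shift_def)

lemma shift_neq_new_points:
  assumes "k \<le> n"
  shows "shift n k p \<noteq> k+1" and "shift n k p \<noteq> 2*n-k+2"
  using assms by (auto simp: shift_def)

lemma shift_onto:
  assumes "k \<le> n" and "1 \<le> q" "q \<le> 2*n+2" and "q \<noteq> k+1" "q \<noteq> 2*n-k+2"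
  obtains p where "1 \<le> p" "p \<le> 2*n" "shift n k p = q"
proof (cases "q \<le> k")
  case True
  then show ?thesis using that[of q] assms by (simp add: shift_left)
next
  case False
  show ?thesis
  proof (cases "q \<le> 2*n-k+1")
    case True
    then show ?thesis using that[of "q-1"] assms False by (simp add: shift_middle)
  next
    case False
    then show ?thesis using that[of "q-2"] assms \<open>\<not> q \<le> k\<close> by (simp add: shift_right)
  qed
qed

lemma mem_insert_chord_iff:
  "(s,e) \<in> insert_chord n k C \<longleftrightarrow>
     (s,e) = (k+1, 2*n-k+2) \<or> (\<exists>a b. (a,b) \<in> C \<and> s = shift n k a \<and> e = shift n k b)"
  unfolding insert_chord_def by force

lemma is_diagram_insert_chord:
  assumes "k \<le> n" and C: "is_diagram n C"
  shows "is_diagram (n+1) (insert_chord n k C)"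
proof -
  let ?D = "insert_chord n k C" and ?c = "(k+1, 2*n-k+2)"
  have "\<forall>x\<in>?D. fst x < snd x \<and> fst x \<in> {1..2*(n+1)} \<and> snd x \<in> {1..2*(n+1)}"
  proof
    fix x assume "x \<in> ?D"
    then consider "x = ?c" | a b where "(a,b) \<in> C" "x = (shift n k a, shift n k b)"
      unfolding insert_chord_def by auto
    then show "fst x < snd x \<and> fst x \<in> {1..2*(n+1)} \<and> snd x \<in> {1..2*(n+1)}"
    proof cases
      case 2
      then have "1 \<le> a" "a < b" "b \<le> 2*n" using is_diagram_chordD[OF C] by auto
      then show ?thesis
        using 2(2) strict_monoD[OF strict_mono_shift, of a b] by (auto simp: shift_def)
    qed (use assms in auto)
  qed
  moreover have "\<forall>q\<in>{1..2*(n+1)}. \<exists>!x\<in>?D. q = fst x \<or> q = snd x"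
  proof
    fix q assume q: "q \<in> {1..2*(n+1)}"
    show "\<exists>!x\<in>?D. q = fst x \<or> q = snd x"
    proof (cases "q = k+1 \<or> q = 2*n-k+2")
      case True
      have "x = ?c" if x: "x \<in> ?D" "q = fst x \<or> q = snd x" for x
      proof (rule ccontr)
        assume "x \<noteq> ?c"
        then obtain a b where "x = (shift n k a, shift n k b)"
          using x(1) unfolding insert_chord_def by auto
        then show False using x(2) True shift_neq_new_points[OF assms(1)] by (metis fst_conv snd_conv)
      qed
      then show ?thesis using True by (intro ex1I[of _ ?c]) (auto simp: insert_chord_def)
    next
      case False
      then obtain p where p: "1 \<le> p" "p \<le> 2*n" "shift n k p = q"
        using shift_onto[OF assms(1)] q by auto
      obtain a b where ab: "(a,b) \<in> C" "p = a \<or> p = b"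
        using is_diagram_coverE[OF C p(1,2)] .
      have "x = (shift n k a, shift n k b)" if x: "x \<in> ?D" "q = fst x \<or> q = snd x" for x
      proof -
        from x False obtain a' b' where "(a',b') \<in> C" "x = (shift n k a', shift n k b')"
          unfolding insert_chord_def by auto
        then show ?thesis
          using is_diagram_chord_unique[OF C ab(1), of a' b' p] ab(2) p(3) x(2) by auto
      qed
      then show ?thesis using ab p(3) by (intro ex1I[of _ "(shift n k a, shift n k b)"])
        (auto simp: insert_chord_def)
    qed
  qed
  ultimately show ?thesis unfolding is_diagram_def by (intro conjI)
qed

lemma K_chordD:
  assumes "C \<in> K k n" and "(a,b) \<in> C"
  shows "1 \<le> a" and "a < b" and "a + k \<le> b" and "b \<le> 2*n"
proof -
  have D: "is_diagram n C" and "k \<le> b - a" using assms unfolding K_def by auto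
  then show "1 \<le> a" "a < b" "a + k \<le> b" "b \<le> 2*n" using is_diagram_chordD[OF D assms(2)] by auto
qed

lemma mem_Sch_iff:
  assumes "C \<in> K k n"
  shows "(a,b) \<in> Sch n k C \<longleftrightarrow> (a,b) \<in> C \<and> a \<le> k \<and> 2*n-k < b"
  using K_chordD[OF assms, of a b] unfolding Sch_def Mset_def by auto

lemma card_le_card_image_Un:
  assumes "A \<subseteq> f ` X \<union> g ` Y" and "finite X" and "finite Y"
  shows "card A \<le> card X + card Y"
proof -
  have "card A \<le> card (f ` X \<union> g ` Y)" using assms by (intro card_mono) auto
  also have "\<dots> \<le> card (f ` X) + card (g ` Y)" by (rule card_Un_le)
  also have "\<dots> \<le> card X + card Y" by (intro add_mono card_image_le assms(2,3))
  finally show ?thesis .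
qed

definition left_chords :: "nat \<Rightarrow> nat \<Rightarrow> (nat \<times> nat) set \<Rightarrow> (nat \<times> nat) set" where
  "left_chords n k C = {c \<in> C. snd c \<le> 2*n-k}"

definition right_chords :: "nat \<Rightarrow> nat \<Rightarrow> (nat \<times> nat) set \<Rightarrow> (nat \<times> nat) set" where
  "right_chords n k C = {c \<in> C. k < fst c}"

locale long_chord_diagram =
  fixes n k :: nat and C :: "(nat \<times> nat) set"
  assumes k_le_n: "k \<le> n" and balanced: "3*(n-k) \<le> n" and C_in_K: "C \<in> K k n"
begin

lemma double_gap_le: "2*(n-k) \<le> k"
  using k_le_n balanced by linarith

lemma is_diagram_C: "is_diagram n C"
  using C_in_K unfolding K_def by blast

lemma finite_C: "finite C"
  using is_diagram_finite[OF is_diagram_C] .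

abbreviation S where "S \<equiv> Sch n k C"
abbreviation L where "L \<equiv> left_chords n k C"
abbreviation R where "R \<equiv> right_chords n k C"

lemma finite_chord_classes: "finite S" "finite L" "finite R"
  using finite_C unfolding Sch_def left_chords_def right_chords_def by auto

lemma left_chord_start_le: "(a,b) \<in> L \<Longrightarrow> a \<le> 2*(n-k)"
  using K_chordD[OF C_in_K, of a b] k_le_n unfolding left_chords_def by auto

lemma chord_unique: "(a,b) \<in> C \<Longrightarrow> (a',b') \<in> C \<Longrightarrow> q = a \<or> q = b \<Longrightarrow> q = a' \<or> q = b'
    \<Longrightarrow> a = a' \<and> b = b'"
  using is_diagram_chord_unique[OF is_diagram_C] .

lemma card_S_add_card_L: "card S + card L = k"
proof (rule antisym)
  have "inj_on fst (S \<union> L)"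
  proof (rule inj_onI)
    fix x y assume xy: "x \<in> S \<union> L" "y \<in> S \<union> L" "fst x = fst y"
    obtain a b a' b' where "x = (a,b)" "y = (a',b')" by force
    then show "x = y" using xy chord_unique[of a b a' b' a]
      unfolding Sch_def left_chords_def by auto
  qed
  moreover have "fst ` (S \<union> L) \<subseteq> {1..k}"
  proof
    fix q assume "q \<in> fst ` (S \<union> L)"
    then obtain b where b: "(q,b) \<in> S \<union> L" by force
    then have "(q,b) \<in> C" unfolding Sch_def left_chords_def by auto
    then show "q \<in> {1..k}"
      using b K_chordD(1)[OF C_in_K] left_chord_start_le[of q b] double_gap_le
        mem_Sch_iff[OF C_in_K, of q b] by auto
  qed
  moreover have "S \<inter> L = {}" using mem_Sch_iff[OF C_in_K] unfolding left_chords_def by auto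
  ultimately show "card S + card L \<le> k"
    using card_inj_on_le[of fst "S \<union> L" "{1..k}"] finite_chord_classes
    by (simp add: card_Un_disjoint)
next
  have "{1..k} \<subseteq> fst ` S \<union> fst ` L"
  proof
    fix q assume q: "q \<in> {1..k}"
    then obtain a b where ab: "(a,b) \<in> C" "q = a \<or> q = b"
      using is_diagram_coverE[OF is_diagram_C, of q] k_le_n by auto
    then have "q = a" using K_chordD[OF C_in_K ab(1)] q by auto
    moreover have "(a,b) \<in> S \<union> L"
      using ab q mem_Sch_iff[OF C_in_K, of a b] \<open>q = a\<close> unfolding left_chords_def by auto
    ultimately show "q \<in> fst ` S \<union> fst ` L" by force
  qed
  then show "k \<le> card S + card L"
    using card_le_card_image_Un[of "{1..k}" fst S fst L] finite_chord_classes by simp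
qed

lemma k_le_card_S_add_card_R: "k \<le> card S + card R"
proof -
  have "{2*n-k+1..2*n} \<subseteq> snd ` S \<union> snd ` R"
  proof
    fix q assume q: "q \<in> {2*n-k+1..2*n}"
    then obtain a b where ab: "(a,b) \<in> C" "q = a \<or> q = b"
      using is_diagram_coverE[OF is_diagram_C, of q] by auto
    then have "q = b" using K_chordD[OF C_in_K ab(1)] q by auto
    moreover have "(a,b) \<in> S \<union> R"
      using ab q mem_Sch_iff[OF C_in_K, of a b] \<open>q = b\<close> unfolding right_chords_def by auto
    ultimately show "q \<in> snd ` S \<union> snd ` R" by force
  qed
  then have "card {2*n-k+1..2*n} \<le> card S + card R"
    using card_le_card_image_Un[of _ snd S snd R] finite_chord_classes by blast
  then show ?thesis using k_le_n by simp
qed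

lemma card_L_add_card_R_le: "card L + card R \<le> 2*(n-k)"
proof -
  have "inj_on snd L" "inj_on fst R"
    using chord_unique unfolding left_chords_def right_chords_def inj_on_def
    by (simp_all add: prod_eq_iff) metis+
  moreover have "snd ` L \<inter> fst ` R = {}"
  proof (rule ccontr)
    assume "snd ` L \<inter> fst ` R \<noteq> {}"
    then obtain a b b' where "(a,b) \<in> L" "(b,b') \<in> R" by force
    then show False using chord_unique[of a b b b' b] K_chordD(2)[OF C_in_K, of b b']
      unfolding left_chords_def right_chords_def by auto
  qed
  moreover have "snd ` L \<union> fst ` R \<subseteq> {k+1..2*n-k}"
  proof
    fix q assume "q \<in> snd ` L \<union> fst ` R"
    then obtain a b where "(a,b) \<in> L \<and> q = b \<or> (a,b) \<in> R \<and> q = a" by force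
    then show "q \<in> {k+1..2*n-k}"
      using K_chordD[OF C_in_K, of a b] unfolding left_chords_def right_chords_def by auto
  qed
  ultimately have "card L + card R \<le> card {k+1..2*n-k}"
    using card_mono[of "{k+1..2*n-k}" "snd ` L \<union> fst ` R"] finite_chord_classes
    by (simp add: card_Un_disjoint card_image)
  then show ?thesis using k_le_n by simp
qed

lemma card_L_le: "card L \<le> n-k"
  using card_S_add_card_L k_le_card_S_add_card_R card_L_add_card_R_le by linarith

lemma card_S_ge: "n-k \<le> card S"
  using card_S_add_card_L card_L_le double_gap_le by linarith

end

lemma funpow_countdown_invariant:
  assumes step: "\<And>D c. P D c \<Longrightarrow> 0 < c \<Longrightarrow> P (f D) (c - 1)" and "P D m" and "t \<le> m"
  shows "P ((f ^^ t) D) (m - t)"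
  using assms(3)
proof (induction t)
  case (Suc t)
  then show ?case using step[of "(f ^^ t) D" "m - t"] by (simp add: diff_Suc)
qed (simp add: assms(2))

lemma swap_step_eq:
  assumes D: "is_diagram N D" and x: "(x,e0) \<in> D" and p: "(p,ep) \<in> D" "ep \<in> E" "p < x"
    and nearest: "\<And>s e. (s,e) \<in> D \<Longrightarrow> e \<in> E \<Longrightarrow> s < x \<Longrightarrow> s \<le> p"
  shows "swap_step E e0 D = D - {(x,e0),(p,ep)} \<union> {(p,e0),(x,ep)}"
proof -
  have "(THE s. (s,e0) \<in> D) = x"
    using is_diagram_chord_unique[OF D _ x] x by (intro the_equality) blast+
  moreover have "Max {s. \<exists>e\<in>E. (s,e) \<in> D \<and> s < x} = p"
    using nearest p by (intro Max_eqI) (auto intro: finite_subset[of _ "{..<x}"])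
  moreover have "(THE e. (p,e) \<in> D) = ep"
    using is_diagram_chord_unique[OF D _ p(1)] p(1) by (intro the_equality) blast+
  ultimately show ?thesis unfolding swap_step_def Let_def by simp
qed

lemma card_starts_before_nearest:
  assumes D: "is_diagram N D" and p: "(p,ep) \<in> D" "ep \<in> E" "p < x"
    and nearest: "\<And>s e. (s,e) \<in> D \<Longrightarrow> e \<in> E \<Longrightarrow> s < x \<Longrightarrow> s \<le> p"
  shows "card {d \<in> D. snd d \<in> E \<and> fst d < x} = Suc (card {d \<in> D. snd d \<in> E \<and> fst d < p})"
proof -
  have "{d \<in> D. snd d \<in> E \<and> fst d < x} = insert (p,ep) {d \<in> D. snd d \<in> E \<and> fst d < p}"
  proof (intro equalityI subsetI)
    fix d assume d: "d \<in> {d \<in> D. snd d \<in> E \<and> fst d < x}"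
    show "d \<in> insert (p,ep) {d \<in> D. snd d \<in> E \<and> fst d < p}"
    proof (cases "fst d = p")
      case True
      then show ?thesis
        using is_diagram_chord_unique[OF D _ p(1), of "fst d" "snd d" p] d by (cases d) auto
    next
      case False
      then show ?thesis using nearest[of "fst d" "snd d"] d by auto
    qed
  qed (use p in auto)
  then show ?thesis using is_diagram_finite[OF D] by simp
qed

context long_chord_diagram
begin

abbreviation D0 where "D0 \<equiv> insert_chord n k C"
definition E where "E = shift n k ` snd ` S"
abbreviation e0 where "e0 \<equiv> 2*n-k+2"

lemma E_ge: "e \<in> E \<Longrightarrow> 2*n-k+3 \<le> e"
  using mem_Sch_iff[OF C_in_K] shift_right[OF k_le_n] unfolding E_def by fastforce

lemma shift_end_in_E_iff:
  assumes "(a,b) \<in> C"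
  shows "shift n k b \<in> E \<longleftrightarrow> (a,b) \<in> S"
proof
  assume "shift n k b \<in> E"
  then obtain a' where "(a',b) \<in> S" unfolding E_def by force
  then show "(a,b) \<in> S" using chord_unique[OF assms, of a' b b] unfolding Sch_def by auto
qed (force simp: E_def)

lemma initial_S_chord_long:
  assumes "(s,e) \<in> D0" and "e \<in> E"
  shows "s + k + 2 \<le> e"
proof -
  have "e \<noteq> e0" using E_ge assms(2) by fastforce
  then obtain a b where ab: "(a,b) \<in> C" "s = shift n k a" "e = shift n k b"
    using assms(1) mem_insert_chord_iff by blast
  then have "(a,b) \<in> S" using shift_end_in_E_iff assms(2) by blast
  then show ?thesis
    using ab mem_Sch_iff[OF C_in_K] shift_left shift_right[OF k_le_n] K_chordD(3)[OF C_in_K ab(1)]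
    by auto
qed

lemma initial_other_chord:
  assumes "(s,e) \<in> D0" and "e \<notin> E" and "e \<noteq> e0"
  shows "s + k + 1 \<le> e" and "s \<le> k \<Longrightarrow> s \<in> fst ` L"
proof -
  obtain a b where ab: "(a,b) \<in> C" "s = shift n k a" "e = shift n k b"
    using assms(1,3) mem_insert_chord_iff by blast
  then have "(a,b) \<notin> S" using shift_end_in_E_iff assms(2) by blast
  \<comment> \<open>No chord of length at least k fits inside M, so a chord outside \<open>S_C\<close> has exactly one
    endpoint in M.\<close>
  then have "a \<le> k \<and> b \<le> 2*n-k \<and> s = a \<and> e = b+1 \<or> k < a \<and> 2*n-k < b \<and> s = a+1 \<and> e = b+2"
    using ab mem_Sch_iff[OF C_in_K, of a b] K_chordD[OF C_in_K ab(1)] double_gap_le k_le_n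
      shift_left shift_middle shift_right[OF k_le_n]
    by (cases "a \<le> k") auto
  then show "s + k + 1 \<le> e" and "s \<le> k \<Longrightarrow> s \<in> fst ` L"
    using K_chordD(3)[OF C_in_K ab(1)] ab(1) unfolding left_chords_def by force+
qed

lemma card_S_le_initial_count: "card S \<le> card {d \<in> D0. snd d \<in> E \<and> fst d < k+1}"
proof -
  let ?f = "\<lambda>(a,b). (shift n k a, shift n k b)"
  have "?f ` S \<subseteq> {d \<in> D0. snd d \<in> E \<and> fst d < k+1}"
  proof
    fix d assume "d \<in> ?f ` S"
    then obtain a b where ab: "(a,b) \<in> S" and d: "d = (shift n k a, shift n k b)" by auto
    then have "(a,b) \<in> C" and "shift n k a = a" and "a \<le> k"
      using mem_Sch_iff[OF C_in_K] shift_left by auto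
    moreover have "shift n k b \<in> E" using ab unfolding E_def by force
    ultimately show "d \<in> {d \<in> D0. snd d \<in> E \<and> fst d < k+1}"
      using d mem_insert_chord_iff by auto
  qed
  moreover have "inj_on ?f S" by (rule inj_onI) auto
  moreover have "finite D0" using is_diagram_finite[OF is_diagram_insert_chord[OF k_le_n is_diagram_C]] .
  ultimately show ?thesis by (intro card_inj_on_le) auto
qed

text \<open>The state after some swaps: the new chord is \<open>(x, e0)\<close>, and \<open>cnt\<close> chords of \<open>S_C\<close>
  (recognised by their end points \<open>E\<close>) start left of it. Those have not moved since the insertion,
  which lengthened them by two; chords outside \<open>S_C\<close> never move.\<close>
definition swap_inv :: "(nat \<times> nat) set \<Rightarrow> nat \<Rightarrow> nat \<Rightarrow> bool" where
  "swap_inv D x cnt \<longleftrightarrow> is_diagram (n+1) D \<and> (x,e0) \<in> D \<and> x \<le> k+1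
     \<and> card {d \<in> D. snd d \<in> E \<and> fst d < x} = cnt
     \<and> (\<forall>s e. (s,e) \<in> D \<longrightarrow> e \<in> E \<longrightarrow> s + k + 1 \<le> e)
     \<and> (\<forall>s e. (s,e) \<in> D \<longrightarrow> e \<in> E \<longrightarrow> s < x \<longrightarrow> s + k + 2 \<le> e)
     \<and> (\<forall>s e. (s,e) \<in> D \<longrightarrow> e \<notin> E \<longrightarrow> e \<noteq> e0 \<longrightarrow> (s,e) \<in> D0)"

lemma swap_inv_initial: "swap_inv D0 (k+1) (card {d \<in> D0. snd d \<in> E \<and> fst d < k+1})"
  unfolding swap_inv_def
proof (intro conjI allI impI)
  show "is_diagram (n+1) D0" by (rule is_diagram_insert_chord[OF k_le_n is_diagram_C])
  show "(k+1,e0) \<in> D0" by (simp add: insert_chord_def)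
next
  fix s e assume "(s,e) \<in> D0" "e \<in> E"
  then show "s + k + 1 \<le> e" and "s + k + 2 \<le> e" using initial_S_chord_long by fastforce+
qed simp_all

lemma swap_inv_left_point:
  assumes inv: "swap_inv D x cnt" and q: "1 \<le> q" "q < x"
  shows "(\<exists>e\<in>E. (q,e) \<in> D) \<or> q \<in> fst ` L"
proof -
  have D: "is_diagram (n+1) D" and x: "(x,e0) \<in> D" "x \<le> k+1"
    and old: "\<And>s e. (s,e) \<in> D \<Longrightarrow> e \<notin> E \<Longrightarrow> e \<noteq> e0 \<Longrightarrow> (s,e) \<in> D0"
    using inv unfolding swap_inv_def by blast+
  obtain a b where ab: "(a,b) \<in> D" "q = a \<or> q = b"
    using is_diagram_coverE[OF D q(1)] q(2) x(2) k_le_n by auto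
  have "1 \<le> a" using is_diagram_chordD(2)[OF D ab(1)] .
  consider "b \<in> E" | "b = e0" | "b \<notin> E" "b \<noteq> e0" by blast
  then show ?thesis
  proof cases
    case 1
    then have "q = a" using E_ge[of b] ab(2) q(2) x(2) k_le_n by auto
    then show ?thesis using 1 ab(1) by blast
  next
    case 2
    then have "a = x" using is_diagram_chord_unique[OF D ab(1) x(1), of b] by simp
    then show ?thesis using ab(2) q(2) 2 x(2) k_le_n by auto
  next
    case 3
    then have "(a,b) \<in> D0" using old ab(1) by blast
    then have "a + k + 1 \<le> b" using initial_other_chord(1) 3 by blast
    then have "q = a" and "a \<le> k" using \<open>1 \<le> a\<close> ab(2) q(2) x(2) by auto
    then show ?thesis using initial_other_chord(2)[OF \<open>(a,b) \<in> D0\<close> 3] by simp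
  qed
qed

lemma swap_inv_nearest_S_chord:
  assumes inv: "swap_inv D x cnt" and "0 < cnt"
  obtains p ep where "(p,ep) \<in> D" "ep \<in> E" "p < x"
    "\<And>s e. (s,e) \<in> D \<Longrightarrow> e \<in> E \<Longrightarrow> s < x \<Longrightarrow> s \<le> p"
proof -
  let ?P = "{s. \<exists>e\<in>E. (s,e) \<in> D \<and> s < x}"
  have "card {d \<in> D. snd d \<in> E \<and> fst d < x} = cnt" using inv unfolding swap_inv_def by blast
  then have "{d \<in> D. snd d \<in> E \<and> fst d < x} \<noteq> {}" using \<open>0 < cnt\<close> by (metis card.empty less_irrefl)
  then obtain d where d: "d \<in> D" "snd d \<in> E" "fst d < x" by blast
  then have "fst d \<in> ?P" by (intro CollectI bexI[of _ "snd d"]) auto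
  then have "?P \<noteq> {}" by blast
  have "finite ?P" by (rule finite_subset[of _ "{..<x}"]) auto
  then have "Max ?P \<in> ?P" using \<open>?P \<noteq> {}\<close> by (rule Max_in)
  moreover have "s \<le> Max ?P" if "s \<in> ?P" for s using \<open>finite ?P\<close> that by (rule Max_ge)
  ultimately show ?thesis using that by blast
qed

lemma swap_inv_swapped_chord_long:
  assumes inv: "swap_inv D x cnt" and p: "(p,ep) \<in> D" "ep \<in> E" "p < x"
    and nearest: "\<And>s e. (s,e) \<in> D \<Longrightarrow> e \<in> E \<Longrightarrow> s < x \<Longrightarrow> s \<le> p"
  shows "x + k + 1 \<le> ep"
proof (cases "x = p + 1")
  case True
  have "\<And>s e. (s,e) \<in> D \<Longrightarrow> e \<in> E \<Longrightarrow> s < x \<Longrightarrow> s + k + 2 \<le> e"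
    using inv unfolding swap_inv_def by blast
  then have "p + k + 2 \<le> ep" using p .
  then show ?thesis using True by simp
next
  case False
  have "is_diagram (n+1) D" using inv unfolding swap_inv_def by blast
  then have "1 \<le> p" using p(1) by (rule is_diagram_chordD(2))
  \<comment> \<open>The point just left of the new chord does not start an \<open>S_C\<close>-chord, so it starts a chord
    ending in M; such starts are at most \<open>2(n-k)\<close>.\<close>
  have "\<not> (\<exists>e\<in>E. (x - 1, e) \<in> D)"
  proof
    assume "\<exists>e\<in>E. (x - 1, e) \<in> D"
    then obtain e where "e \<in> E" "(x - 1, e) \<in> D" by blast
    then have "x - 1 \<le> p" using nearest[of "x - 1" e] p(3) by simp
    then show False using False p(3) by linarith
  qed
  moreover have "1 \<le> x - 1" "x - 1 < x" using \<open>1 \<le> p\<close> p(3) False by linarith+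
  ultimately have "x - 1 \<in> fst ` L" using swap_inv_left_point[OF inv] by blast
  then obtain b where "(x - 1, b) \<in> L" by force
  then have "x \<le> 2*(n-k) + 1" using left_chord_start_le by force
  then show ?thesis using E_ge[OF p(2)] k_le_n by linarith
qed

lemma swap_inv_step:
  assumes inv: "swap_inv D x cnt" and "0 < cnt"
  obtains x' where "swap_inv (swap_step E e0 D) x' (cnt - 1)"
proof -
  obtain p ep where p: "(p,ep) \<in> D" "ep \<in> E" "p < x"
    and nearest: "\<And>s e. (s,e) \<in> D \<Longrightarrow> e \<in> E \<Longrightarrow> s < x \<Longrightarrow> s \<le> p"
    using swap_inv_nearest_S_chord[OF assms] by blast
  have D: "is_diagram (n+1) D" and x: "(x,e0) \<in> D" "x \<le> k+1"
    and cnt: "card {d \<in> D. snd d \<in> E \<and> fst d < x} = cnt"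
    using inv unfolding swap_inv_def by blast+
  have e0: "e0 \<notin> E" using E_ge by fastforce
  have long: "x + k + 1 \<le> ep" using swap_inv_swapped_chord_long[OF inv p nearest] .
  let ?D = "D - {(x,e0),(p,ep)} \<union> {(p,e0),(x,ep)}"
  have "swap_step E e0 D = ?D" using swap_step_eq[OF D x(1) p nearest] .
  moreover have "is_diagram (n+1) ?D"
    using is_diagram_swap[OF D x(1) p(1)] p(3) is_diagram_chordD(1)[OF D x(1)] long by simp
  moreover have "{d \<in> ?D. snd d \<in> E \<and> fst d < p} = {d \<in> D. snd d \<in> E \<and> fst d < p}"
    using e0 p(3) by auto
  moreover have "card {d \<in> D. snd d \<in> E \<and> fst d < p} = cnt - 1"
    using card_starts_before_nearest[OF D p nearest] cnt by simp
  ultimately have "swap_inv (swap_step E e0 D) p (cnt - 1)"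
    using inv p e0 long unfolding swap_inv_def by auto
  then show ?thesis using that by blast
qed

lemma swap_inv_final:
  assumes inv: "swap_inv D x i" and "i \<le> n - k"
  shows "D \<in> K (k+1) (n+1)"
proof -
  have D: "is_diagram (n+1) D" and x: "(x,e0) \<in> D" "x \<le> k+1"
    and cnt: "card {d \<in> D. snd d \<in> E \<and> fst d < x} = i"
    and S_long: "\<And>s e. (s,e) \<in> D \<Longrightarrow> e \<in> E \<Longrightarrow> s + k + 1 \<le> e"
    and old: "\<And>s e. (s,e) \<in> D \<Longrightarrow> e \<notin> E \<Longrightarrow> e \<noteq> e0 \<Longrightarrow> (s,e) \<in> D0"
    using inv unfolding swap_inv_def by blast+
  have "{1..x-1} \<subseteq> fst ` {d \<in> D. snd d \<in> E \<and> fst d < x} \<union> fst ` L"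
  proof
    fix q assume "q \<in> {1..x-1}"
    then have q: "1 \<le> q" "q < x" by auto
    from swap_inv_left_point[OF inv q] consider e where "e \<in> E" "(q,e) \<in> D" | "q \<in> fst ` L"
      by blast
    then show "q \<in> fst ` {d \<in> D. snd d \<in> E \<and> fst d < x} \<union> fst ` L"
    proof cases
      case 1
      then have "(q,e) \<in> {d \<in> D. snd d \<in> E \<and> fst d < x}" using q(2) by simp
      then show ?thesis by (intro UnI1 image_eqI[of _ fst "(q,e)"]) simp_all
    qed (rule UnI2)
  qed
  then have "card {1..x-1} \<le> card {d \<in> D. snd d \<in> E \<and> fst d < x} + card L"
    by (rule card_le_card_image_Un) (use is_diagram_finite[OF D] finite_chord_classes in auto)
  then have "x + k + 1 \<le> e0" using cnt card_L_le assms(2) double_gap_le k_le_n by simp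
  have "s + k + 1 \<le> e" if "(s,e) \<in> D" for s e
  proof -
    consider "e \<in> E" | "e = e0" | "e \<notin> E" "e \<noteq> e0" by blast
    then show ?thesis
    proof cases
      case 2
      then have "s = x" using is_diagram_chord_unique[OF D that x(1), of e] by simp
      then show ?thesis using 2 \<open>x + k + 1 \<le> e0\<close> by simp
    next
      case 3
      then show ?thesis using old[OF that 3] initial_other_chord(1) by blast
    qed (use S_long that in blast)
  qed
  then show ?thesis using D unfolding K_def by force
qed

lemma alpha_in_K:
  assumes "i \<le> n - k"
  shows "alpha n k i C \<in> K (k+1) (n+1)"
proof -
  let ?m = "card {d \<in> D0. snd d \<in> E \<and> fst d < k+1}"
  have "i \<le> ?m" using assms card_S_ge card_S_le_initial_count by linarith
  have "\<exists>x. swap_inv ((swap_step E e0 ^^ (?m - i)) D0) x (?m - (?m - i))"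
  proof (rule funpow_countdown_invariant[where P = "\<lambda>D c. \<exists>x. swap_inv D x c"])
    fix D c assume "\<exists>x. swap_inv D x c" and "0 < c"
    then show "\<exists>x. swap_inv (swap_step E e0 D) x (c - 1)" using swap_inv_step by metis
  qed (use swap_inv_initial in auto)
  then obtain x where "swap_inv (alpha n k i C) x i"
    using \<open>i \<le> ?m\<close> unfolding alpha_def Let_def E_def[symmetric] by auto
  then show ?thesis using swap_inv_final assms by blast
qed

end

theorem lemma4:
  fixes n k i :: nat
  assumes "0 < k" and "k \<le> n" and "3 * (n - k) \<le> n" and "i \<le> n - k"
    and "C \<in> K k n"
  shows "alpha n k i C \<in> K (k+1) (n+1)"
proof -
  interpret long_chord_diagram n k C using assms(2,3,5) by unfold_locales
  show ?thesis using assms(4) by (rule alpha_in_K)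
qed

end
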